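(* Assume $1-4M_0=0$. For $x\in\Omega_0$ put $A(x):=\partial_x u_0(x)$ and $B(x):=-\tfrac12\partial_x u_0(x)-\tfrac14+2\rho_0(x)$, and for $t\ge0$ $$D(t,x):=8\rho_0(x)-\big(2A(x)+4B(x)\big)e^{-t/2}-2B(x)\,t\,e^{-t/2}$$ (this is the expression of $\partial_x\eta(t,x)$ for a classical solution of the Lagrangian system, as long as it exists). Then there exist $t>0$ and $x\in\Omega_0$ with $D(t,x)\le0$ if and only if there exists $x\in\Omega_0$ such that $$\partial_x u_0(x)<\min\Big\{0,\,4\rho_0(x)-\tfrac12\Big\}$$ and $$\ln\left(\frac{8\rho_0(x)}{8\rho_0(x)-2\partial_x u_0(x)-1}\right)\le\frac{2\partial_x u_0(x)}{8\rho_0(x)-2\partial_x u_0(x)-1}.$$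
   Context: $\Omega_0=(a_0,b_0)$ is a bounded open interval, $\rho_0\in H^2(\Omega_0)$ with $\rho_0>0$ on $\Omega_0$, $u_0\in H^3(\Omega_0)$ (both continuous up to the boundary), and $M_0:=\int_{\Omega_0}\rho_0(x)\,dx>0$. Note $D(0,x)=1$ for all $x$. *)

theory Defs
  imports "HOL-Analysis.Analysis"
begin

definition Acoef :: "(real \<Rightarrow> real) \<Rightarrow> real \<Rightarrow> real" where
  "Acoef u0 x = deriv u0 x"

definition Bcoef :: "(real \<Rightarrow> real) \<Rightarrow> (real \<Rightarrow> real) \<Rightarrow> real \<Rightarrow> real" where
  "Bcoef rho0 u0 x = - (1/2) * deriv u0 x - 1/4 + 2 * rho0 x"

definition Dfun :: "(real \<Rightarrow> real) \<Rightarrow> (real \<Rightarrow> real) \<Rightarrow> real \<Rightarrow> real \<Rightarrow> real" where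
  "Dfun rho0 u0 t x = 8 * rho0 x - (2 * Acoef u0 x + 4 * Bcoef rho0 u0 x) * exp (- t / 2)
     - 2 * Bcoef rho0 u0 x * t * exp (- t / 2)"

end

theory Submission
  imports Defs
begin

text \<open>
  Up to the positive factor \<open>exp (-t/2)\<close>, \<open>D(t,x)\<close> is \<open>p(t/2)\<close> for the convex function
  \<open>p s = 8\<rho> e\<^sup>s - (8\<rho> - 1) - c s\<close> with \<open>\<rho> = \<rho>\<^sub>0(x)\<close>, \<open>c = 8\<rho> - 2u\<^sub>0'(x) - 1\<close>, and \<open>p 0 = 1\<close>.
  If \<open>c \<le> 8\<rho>\<close> then \<open>p \<ge> 1\<close> on \<open>[0,\<infinity>)\<close>; otherwise \<open>p\<close> attains its minimum at
  \<open>s = ln (c/8\<rho>) > 0\<close>, and the logarithmic condition says exactly that this minimum is \<open>\<le> 0\<close>.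
\<close>

lemma exp_minus_linear_ge:
  fixes a c s :: real
  assumes "a > 0" "c > 0"
  shows "c - c * ln (c / a) \<le> a * exp s - c * s"
proof -
  have "1 + (s - ln (c / a)) \<le> exp (s - ln (c / a))"
    by (rule exp_ge_add_one_self)
  also have "\<dots> = a / c * exp s"
    using assms by (simp add: exp_diff)
  finally show ?thesis
    using assms by (simp add: field_simps)
qed

definition blowup_profile :: "real \<Rightarrow> real \<Rightarrow> real \<Rightarrow> real" where
  "blowup_profile r d s = 8 * r * exp s - (8 * r - 1) - (8 * r - 2 * d - 1) * s"

lemma Dfun_eq_blowup_profile:
  "Dfun rho0 u0 t x = exp (- t / 2) * blowup_profile (rho0 x) (deriv u0 x) (t / 2)"
proof -
  have "exp (- t / 2) * exp (t / 2) = 1"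
    by (simp add: exp_minus field_simps)
  then show ?thesis
    unfolding Dfun_def Acoef_def Bcoef_def blowup_profile_def by (simp add: algebra_simps)
qed

lemma Dfun_nonpos_iff:
  "Dfun rho0 u0 t x \<le> 0 \<longleftrightarrow> blowup_profile (rho0 x) (deriv u0 x) (t / 2) \<le> 0"
  unfolding Dfun_eq_blowup_profile by (simp add: mult_le_0_iff)

lemma ex_Dfun_nonpos_iff:
  "(\<exists>t>0. Dfun rho0 u0 t x \<le> 0) \<longleftrightarrow> (\<exists>s>0. blowup_profile (rho0 x) (deriv u0 x) s \<le> 0)"
proof
  assume "\<exists>t>0. Dfun rho0 u0 t x \<le> 0"
  then obtain t where "t > 0" "Dfun rho0 u0 t x \<le> 0" by blast
  then show "\<exists>s>0. blowup_profile (rho0 x) (deriv u0 x) s \<le> 0"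
    by (intro exI[of _ "t / 2"]) (simp add: Dfun_nonpos_iff)
next
  assume "\<exists>s>0. blowup_profile (rho0 x) (deriv u0 x) s \<le> 0"
  then obtain s where "s > 0" "blowup_profile (rho0 x) (deriv u0 x) s \<le> 0" by blast
  then show "\<exists>t>0. Dfun rho0 u0 t x \<le> 0"
    by (intro exI[of _ "2 * s"]) (simp add: Dfun_nonpos_iff)
qed

lemma blowup_profile_ge_one:
  assumes "r > 0" "d \<ge> -1/2" "s \<ge> 0"
  shows "blowup_profile r d s \<ge> 1"
proof -
  have "(8 * r - 2 * d - 1) * s \<le> 8 * r * s"
    using assms by (intro mult_right_mono) auto
  moreover have "8 * r * (1 + s) \<le> 8 * r * exp s"
    using assms(1) exp_ge_add_one_self[of s] by simp
  ultimately show ?thesis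
    unfolding blowup_profile_def by (simp add: algebra_simps)
qed

lemma blowup_profile_ge_min:
  assumes "r > 0" "c > 0" "c = 8 * r - 2 * d - 1"
  shows "- 2 * d - c * ln (c / (8 * r)) \<le> blowup_profile r d s"
  using exp_minus_linear_ge[of "8 * r" c s] assms unfolding blowup_profile_def by simp

lemma blowup_profile_at_min:
  assumes "r > 0" "c > 0" "c = 8 * r - 2 * d - 1"
  shows "blowup_profile r d (ln (c / (8 * r))) = - 2 * d - c * ln (c / (8 * r))"
  using assms unfolding blowup_profile_def by simp

lemma blowup_profile_nonpos_iff:
  fixes r d :: real
  assumes r: "r > 0"
  shows "(\<exists>s>0. blowup_profile r d s \<le> 0) \<longleftrightarrow>
    d < min 0 (4 * r - 1/2) \<and> ln (8 * r / (8 * r - 2 * d - 1)) \<le> 2 * d / (8 * r - 2 * d - 1)"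
    (is "_ \<longleftrightarrow> _ \<and> ln (8 * r / ?c) \<le> 2 * d / ?c")
proof -
  define l where "l = ln (?c / (8 * r))"
  have ln_condition_iff: "ln (8 * r / ?c) \<le> 2 * d / ?c \<longleftrightarrow> - 2 * d \<le> ?c * l" if c: "?c > 0"
  proof -
    have "ln (8 * r / ?c) = - l"
      using r c by (simp add: l_def ln_div)
    then show ?thesis
      using c by (simp add: pos_le_divide_eq mult.commute[of l]) linarith
  qed
  show ?thesis
  proof
    assume "\<exists>s>0. blowup_profile r d s \<le> 0"
    then obtain s where s: "s > 0" "blowup_profile r d s \<le> 0" by blast
    have d: "d < -1/2"
    proof (rule ccontr)
      assume "\<not> d < -1/2"
      then have "blowup_profile r d s \<ge> 1"
        using blowup_profile_ge_one[OF r, of d s] s by simp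
      with s show False by simp
    qed
    then have c: "?c > 0" using r by simp
    have "- 2 * d \<le> ?c * l"
      using blowup_profile_ge_min[OF r c refl, of s] s unfolding l_def[symmetric] by linarith
    then show "d < min 0 (4 * r - 1/2) \<and> ln (8 * r / ?c) \<le> 2 * d / ?c"
      using d r c ln_condition_iff by simp
  next
    assume H: "d < min 0 (4 * r - 1/2) \<and> ln (8 * r / ?c) \<le> 2 * d / ?c"
    then have c: "?c > 0" by simp
    have "- 2 * d \<le> ?c * l"
      using H ln_condition_iff[OF c] by simp
    then have "0 < ?c * l"
      using H by simp
    then have "l > 0"
      using c by (simp add: zero_less_mult_iff)
    moreover have "blowup_profile r d l \<le> 0"
      using blowup_profile_at_min[OF r c refl] \<open>- 2 * d \<le> ?c * l\<close>
      unfolding l_def[symmetric] by linarith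
    ultimately show "\<exists>s>0. blowup_profile r d s \<le> 0" by blast
  qed
qed

text \<open>
  Only the positivity of \<open>\<rho>\<^sub>0\<close> is needed: the regularity and mass hypotheses enter the
  paper only in deriving the formula for \<open>\<partial>\<^sub>x\<eta>\<close>, which here is the definition of \<open>Dfun\<close>.
\<close>

theorem proposition3p2:
  fixes a0 b0 :: real and rho0 u0 :: "real \<Rightarrow> real"
  assumes "a0 < b0"
    and "continuous_on {a0..b0} rho0"
    and "\<forall>x\<in>{a0<..<b0}. rho0 x > 0"
    and "continuous_on {a0..b0} u0"
    and "\<forall>x\<in>{a0<..<b0}. u0 differentiable (at x)"
    and "continuous_on {a0<..<b0} (deriv u0)"
    and "integral {a0..b0} rho0 > 0"
    and "1 - 4 * integral {a0..b0} rho0 = 0"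
  shows "(\<exists>t>0. \<exists>x\<in>{a0<..<b0}. Dfun rho0 u0 t x \<le> 0) \<longleftrightarrow>
         (\<exists>x\<in>{a0<..<b0}.
            deriv u0 x < min 0 (4 * rho0 x - 1/2) \<and>
            ln (8 * rho0 x / (8 * rho0 x - 2 * deriv u0 x - 1))
              \<le> 2 * deriv u0 x / (8 * rho0 x - 2 * deriv u0 x - 1))"
proof -
  have "(\<exists>x\<in>{a0<..<b0}. \<exists>t>0. Dfun rho0 u0 t x \<le> 0) \<longleftrightarrow>
        (\<exists>x\<in>{a0<..<b0}. deriv u0 x < min 0 (4 * rho0 x - 1/2) \<and>
            ln (8 * rho0 x / (8 * rho0 x - 2 * deriv u0 x - 1))
              \<le> 2 * deriv u0 x / (8 * rho0 x - 2 * deriv u0 x - 1))"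
    using assms(3) by (intro bex_cong refl) (simp add: ex_Dfun_nonpos_iff blowup_profile_nonpos_iff)
  then show ?thesis
    by blast
qed

end
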